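(* For all natural numbers $n\geq 1$, \[a_4(n)=4p(n)-p(n+1)-2p(n+2)-2p(n+3)+p(n+4)+2p(n+5)-p(n+6).\]
   Context: $p(n)$ denotes the number of partitions of $n$. $a_4(n)$ denotes the number of partitions of $n$ in which the smallest part occurs at least $4$ times. *)

theory Defs
  imports Main "HOL-Library.Multiset"
begin

definition partitions :: "nat \<Rightarrow> nat multiset set" where
  "partitions n = {P. (\<forall>k \<in># P. 0 < k) \<and> sum_mset P = n}"

definition p :: "nat \<Rightarrow> nat" where
  "p n = card (partitions n)"

definition a4 :: "nat \<Rightarrow> nat" where
  "a4 n = card {P \<in> partitions n. P \<noteq> {#} \<and> count P (Min_mset P) \<ge> 4}"

end

theory Submission
  imports Defs
begin

text \<open>Let \<open>a\<^sub>k(n)\<close> count the partitions of \<open>n\<close> whose smallest part occurs at least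
  \<open>k\<close> times. Deleting \<open>k\<close> copies of the smallest part \<open>m\<close> leaves a partition of
  \<open>n - k m\<close> into parts \<open>\<ge> m\<close>, so \<open>a\<^sub>k(n) = \<Sum>\<^sub>m q\<^sub>m(n - k m)\<close>, where \<open>q\<^sub>m(x)\<close>
  counts the partitions of \<open>x\<close> into parts \<open>\<ge> m\<close>. Splitting on whether \<open>m\<close> is a part gives
  \<open>q\<^sub>m(x) = q\<^sub>m\<^sub>+\<^sub>1(x) + q\<^sub>m(x - m)\<close>, and summing this over \<open>m\<close> yields
  \<open>a\<^sub>k\<^sub>+\<^sub>1(n) = a\<^sub>k(n) - a\<^sub>k(n + k) + p(n)\<close>. Since \<open>a\<^sub>1(n) = p(n)\<close> for \<open>n \<ge> 1\<close>,
  three applications of this recurrence express \<open>a\<^sub>4(n)\<close> through \<open>p\<close>.\<close>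

lemma size_le_sum_mset_pos:
  fixes P :: "nat multiset"
  assumes "\<forall>k \<in># P. 0 < k"
  shows "size P \<le> sum_mset P"
  using assms by (induction P) auto

lemma member_le_sum_mset: "(x::nat) \<in># P \<Longrightarrow> x \<le> sum_mset P"
  by (metis le_add1 multi_member_split sum_mset.add_mset)

lemma finite_partitions: "finite (partitions n)"
proof (rule finite_subset)
  show "partitions n \<subseteq> (\<Union>s\<le>n. multisets_of_size {1..n} s)"
  proof
    fix P assume "P \<in> partitions n"
    then have pos: "\<forall>k \<in># P. 0 < k" and sum: "sum_mset P = n"
      by (auto simp: partitions_def)
    have "size P \<le> n" using size_le_sum_mset_pos[OF pos] sum by simp
    moreover have "set_mset P \<subseteq> {1..n}"
      using pos sum member_le_sum_mset by (auto simp: Suc_le_eq)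
    ultimately show "P \<in> (\<Union>s\<le>n. multisets_of_size {1..n} s)"
      by (auto simp: multisets_of_size_def)
  qed
qed auto

definition partitions_ge :: "nat \<Rightarrow> nat \<Rightarrow> nat multiset set" where
  "partitions_ge m n = {P \<in> partitions n. \<forall>k \<in># P. m \<le> k}"

lemma finite_partitions_ge: "finite (partitions_ge m n)"
  unfolding partitions_ge_def using finite_partitions by simp

lemma partitions_ge_1: "partitions_ge 1 n = partitions n"
  by (auto simp: partitions_ge_def partitions_def Suc_le_eq)

lemma partitions_ge_add:
  assumes "m \<ge> 1"
  shows "partitions_ge m (x + m) = partitions_ge (Suc m) (x + m) \<union> add_mset m ` partitions_ge m x"
proof (intro equalityI subsetI)
  fix P assume P: "P \<in> partitions_ge m (x + m)"
  show "P \<in> partitions_ge (Suc m) (x + m) \<union> add_mset m ` partitions_ge m x"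
  proof (cases "m \<in># P")
    case True
    then obtain R where R: "P = add_mset m R" by (metis multi_member_split)
    then have "R \<in> partitions_ge m x" using P by (auto simp: partitions_ge_def partitions_def)
    with R show ?thesis by blast
  next
    case False
    with P show ?thesis by (fastforce simp: partitions_ge_def order_le_less Suc_le_eq)
  qed
next
  fix P assume "P \<in> partitions_ge (Suc m) (x + m) \<union> add_mset m ` partitions_ge m x"
  then show "P \<in> partitions_ge m (x + m)"
    using assms by (auto simp: partitions_ge_def partitions_def)
qed

lemma partitions_ge_less:
  assumes "x < m"
  shows "partitions_ge m x = partitions_ge (Suc m) x"
  using assms by (fastforce simp: partitions_ge_def partitions_def order_le_less Suc_le_eq
      dest: member_le_sum_mset)

text \<open>Extended by zero to negative sizes, so that the recurrences below hold without side
  conditions.\<close>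
definition num_partitions_ge :: "nat \<Rightarrow> int \<Rightarrow> int" where
  "num_partitions_ge m x = (if x < 0 then 0 else int (card (partitions_ge m (nat x))))"

lemma num_partitions_ge_1: "num_partitions_ge 1 (int n) = int (p n)"
  unfolding num_partitions_ge_def partitions_ge_1 p_def by simp

lemma num_partitions_ge_rec:
  assumes "m \<ge> 1"
  shows "num_partitions_ge m x = num_partitions_ge (Suc m) x + num_partitions_ge m (x - int m)"
proof (cases "x < int m")
  case True
  then have "nat x < m" if "x \<ge> 0" using that by simp
  then show ?thesis
    using True by (simp add: num_partitions_ge_def partitions_ge_less[of "nat x" m])
next
  case False
  then obtain y where x: "x = int (y + m)" by (intro that[of "nat x - m"]) auto
  have "partitions_ge (Suc m) (y + m) \<inter> add_mset m ` partitions_ge m y = {}"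
    by (auto simp: partitions_ge_def)
  moreover have "card (add_mset m ` partitions_ge m y) = card (partitions_ge m y)"
    by (rule card_image) (simp add: inj_on_def)
  ultimately have "card (partitions_ge m (y + m))
      = card (partitions_ge (Suc m) (y + m)) + card (partitions_ge m y)"
    by (simp add: partitions_ge_add[OF assms] card_Un_disjoint finite_partitions_ge)
  then show ?thesis by (simp add: x num_partitions_ge_def nat_add_distrib)
qed

definition partitions_min_mult :: "nat \<Rightarrow> nat \<Rightarrow> nat \<Rightarrow> nat multiset set" where
  "partitions_min_mult k m n = {P \<in> partitions n. P \<noteq> {#} \<and> Min_mset P = m \<and> k \<le> count P m}"

lemma bij_betw_partitions_ge_min_mult:
  assumes "k \<ge> 1" "m \<ge> 1"
  shows "bij_betw (\<lambda>R. R + replicate_mset k m)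
           (partitions_ge m x) (partitions_min_mult k m (x + k * m))"
proof (rule bij_betw_byWitness[where f' = "\<lambda>P. P - replicate_mset k m"])
  show "(\<lambda>R. R + replicate_mset k m) ` partitions_ge m x \<subseteq> partitions_min_mult k m (x + k * m)"
  proof safe
    fix R assume R: "R \<in> partitions_ge m x"
    let ?P = "R + replicate_mset k m"
    have "m \<in># ?P" using assms(1) by simp
    moreover have "\<forall>y \<in># ?P. m \<le> y" using R by (auto simp: partitions_ge_def)
    ultimately have "Min_mset ?P = m" by (intro antisym Min_le Min.boundedI) auto
    then show "?P \<in> partitions_min_mult k m (x + k * m)"
      using R assms by (auto simp: partitions_min_mult_def partitions_ge_def partitions_def)
  qed
  show "(\<lambda>P. P - replicate_mset k m) ` partitions_min_mult k m (x + k * m) \<subseteq> partitions_ge m x"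
  proof safe
    fix P assume P: "P \<in> partitions_min_mult k m (x + k * m)"
    then have "replicate_mset k m \<subseteq># P"
      by (simp add: partitions_min_mult_def subseteq_mset_def)
    then have "sum_mset (P - replicate_mset k m) = x"
      using P by (simp add: sum_mset_diff partitions_min_mult_def partitions_def)
    then show "P - replicate_mset k m \<in> partitions_ge m x"
      using P by (auto simp: partitions_ge_def partitions_min_mult_def partitions_def dest: in_diffD)
  qed
qed (auto simp: partitions_min_mult_def subseteq_mset_def intro: subset_mset.diff_add)

lemma partitions_min_mult_eq_empty:
  assumes "n < k * m"
  shows "partitions_min_mult k m n = {}"
proof (rule ccontr)
  assume "partitions_min_mult k m n \<noteq> {}"
  then obtain P where P: "P \<in> partitions n" "k \<le> count P m"
    by (auto simp: partitions_min_mult_def)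
  then have "replicate_mset k m \<subseteq># P" by (simp add: subseteq_mset_def)
  then obtain R where "P = replicate_mset k m + R" by (auto simp: subset_mset.le_iff_add)
  then have "k * m \<le> n" using P(1) by (simp add: partitions_def)
  with assms show False by simp
qed

lemma card_partitions_min_mult:
  assumes "k \<ge> 1" "m \<ge> 1"
  shows "int (card (partitions_min_mult k m n)) = num_partitions_ge m (int n - int k * int m)"
proof (cases "k * m \<le> n")
  case True
  then have n: "n = (n - k * m) + k * m" by simp
  have "card (partitions_min_mult k m n) = card (partitions_ge m (n - k * m))"
    by (subst n, rule bij_betw_same_card[symmetric], rule bij_betw_partitions_ge_min_mult[OF assms])
  moreover have "int n - int k * int m = int (n - k * m)" using True by simp
  ultimately show ?thesis by (simp add: num_partitions_ge_def)
next
  case False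
  then show ?thesis
    by (simp add: partitions_min_mult_eq_empty num_partitions_ge_def flip: of_nat_mult)
qed

definition ak :: "nat \<Rightarrow> nat \<Rightarrow> nat" where
  "ak k n = card {P \<in> partitions n. P \<noteq> {#} \<and> count P (Min_mset P) \<ge> k}"

lemma ak_eq_sum:
  assumes "k \<ge> 1" "n \<le> N"
  shows "int (ak k n) = (\<Sum>m=1..N. num_partitions_ge m (int n - int k * int m))"
proof -
  have "{P \<in> partitions n. P \<noteq> {#} \<and> count P (Min_mset P) \<ge> k}
      = (\<Union>m\<in>{1..N}. partitions_min_mult k m n)"
  proof (intro equalityI subsetI)
    fix P assume P: "P \<in> {P \<in> partitions n. P \<noteq> {#} \<and> count P (Min_mset P) \<ge> k}"
    then have "Min_mset P \<in># P" by simp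
    then have "Min_mset P \<in> {1..N}"
      using P assms(2) member_le_sum_mset[of "Min_mset P" P]
      by (auto simp: partitions_def Suc_le_eq)
    with P show "P \<in> (\<Union>m\<in>{1..N}. partitions_min_mult k m n)"
      by (auto simp: partitions_min_mult_def)
  qed (auto simp: partitions_min_mult_def)
  then have "ak k n = (\<Sum>m=1..N. card (partitions_min_mult k m n))"
    unfolding ak_def
    by (simp add: card_UN_disjoint partitions_min_mult_def finite_partitions disjoint_iff)
  then show ?thesis
    using assms(1) by (simp add: card_partitions_min_mult)
qed

lemma ak_Suc:
  assumes "j \<ge> 1"
  shows "int (ak (Suc j) n) = int (ak j n) - int (ak j (n + j)) + int (p n)"
proof -
  define N where "N = n + j"
  let ?c = num_partitions_ge
  have shifted: "(\<Sum>m=1..N. ?c (Suc m) (int n - int j * int m)) = int (ak j (n + j)) - int (p n)"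
  proof -
    have "(\<Sum>m=1..N. ?c (Suc m) (int n - int j * int m))
        = (\<Sum>m=Suc 1..Suc N. ?c m (int (n + j) - int j * int m))"
      by (subst sum.shift_bounds_cl_Suc_ivl) (simp add: algebra_simps)
    also have "\<dots> = (\<Sum>m=1..Suc N. ?c m (int (n + j) - int j * int m)) - ?c 1 (int n)"
      by (subst sum.atLeast_Suc_atMost[of 1 "Suc N"]) auto
    also have "\<dots> = int (ak j (n + j)) - int (p n)"
      using ak_eq_sum[OF assms, of "n + j" "Suc N"] num_partitions_ge_1[of n]
      by (simp add: N_def)
    finally show ?thesis .
  qed
  have ak_Suc_j: "int (ak (Suc j) n) = (\<Sum>m=1..N. ?c m (int n - int (Suc j) * int m))"
    by (rule ak_eq_sum) (simp_all add: N_def)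
  have rec: "?c m (int n - int j * int m)
      = ?c (Suc m) (int n - int j * int m) + ?c m (int n - int (Suc j) * int m)" if "m \<ge> 1" for m
    using num_partitions_ge_rec[OF that, of "int n - int j * int m"] by (simp add: algebra_simps)
  have "int (ak j n) = (\<Sum>m=1..N. ?c m (int n - int j * int m))"
    by (rule ak_eq_sum[OF assms]) (simp add: N_def)
  also have "\<dots> = (\<Sum>m=1..N.
      ?c (Suc m) (int n - int j * int m) + ?c m (int n - int (Suc j) * int m))"
    by (rule sum.cong[OF refl], rule rec) simp
  also have "\<dots> = int (ak j (n + j)) - int (p n) + int (ak (Suc j) n)"
    by (simp only: sum.distrib shifted ak_Suc_j)
  finally show ?thesis by simp
qed

lemma ak_1:
  assumes "n \<ge> 1"
  shows "ak 1 n = p n"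
proof -
  have "{P \<in> partitions n. P \<noteq> {#} \<and> count P (Min_mset P) \<ge> 1} = partitions n"
  proof (intro equalityI subsetI)
    fix P assume P: "P \<in> partitions n"
    with assms have "P \<noteq> {#}" by (auto simp: partitions_def)
    with P show "P \<in> {P \<in> partitions n. P \<noteq> {#} \<and> count P (Min_mset P) \<ge> 1}"
      by (simp add: Suc_le_eq)
  qed simp
  then show ?thesis unfolding ak_def p_def by simp
qed

theorem theorem1p5:
  fixes n :: nat
  assumes "n \<ge> 1"
  shows "int (a4 n) = 4 * int (p n) - int (p (n+1)) - 2 * int (p (n+2)) - 2 * int (p (n+3))
           + int (p (n+4)) + 2 * int (p (n+5)) - int (p (n+6))"
proof -
  have ak2: "int (ak 2 m) = 2 * int (p m) - int (p (m + 1))" if "m \<ge> 1" for m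
    using ak_Suc[of 1 m] ak_1[of m] ak_1[of "m + 1"] that by (simp add: numeral_2_eq_2)
  have ak3: "int (ak 3 m) = int (ak 2 m) - int (ak 2 (m + 2)) + int (p m)" for m
    using ak_Suc[of 2 m] by simp
  have ak4: "int (ak 4 n) = int (ak 3 n) - int (ak 3 (n + 3)) + int (p n)"
    using ak_Suc[of 3 n] by simp
  have "a4 n = ak 4 n"
    unfolding a4_def ak_def ..
  then show ?thesis
    using ak4 ak3[of n] ak3[of "n + 3"] ak2[of n] ak2[of "n + 2"] ak2[of "n + 3"] ak2[of "n + 5"]
      assms by (simp add: numeral_eq_Suc)
qed

end
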